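(* Let $F:\mathbb{R}\to[0,1]$ be a distribution function. For every $x\in\mathbb{R}$, \[\big(F(x-),F(x)\big)\subseteq\{\alpha\in(0,1):x=F^{\wedge}(\alpha)\}\subseteq\big[F(x-),F(x)\big].\] In particular, if $x_1\neq x_2$ then $\big(F(x_1-),F(x_1)\big)\cap\big(F(x_2-),F(x_2)\big)=\emptyset$. Moreover, \begin{align*} \bigcup_{x\in J_F}\big(F(x-),F(x)\big)&=\{\alpha\in(0,1):\Delta F(F^{\wedge}(\alpha))>0\text{ and }\alpha=F_\lambda(F^{\wedge}(\alpha))\text{ for some }0<\lambda<1\}\\ &=\{F_\lambda(x):0<\lambda<1,\ x\in J_F\}=R_F\big(J_F\times(0,1)\big)\\ &=(0,1)\setminus\big(F(\mathbb{R})\cup F^{-}(\mathbb{R})\big), \end{align*} where the union is disjoint. Consequently, writing $J_F=\{x_n:n\in M\}$ with pairwise distinct $x_n$, where $M=\{1,\dots,m\}$ is finite or $M=\mathbb{N}$, the map \[\Phi_F:(0,1)^M\to\prod_{n\in M}\big(F(x_n-),F(x_n)\big),\qquad (\lambda_n)_{n\in M}\mapsto \big(F_{\lambda_n}(x_n)\big)_{n\in M}\] is well defined and bijective, with inverse \[\Phi_F^{-1}\big((\alpha_n)_{n\in M}\big)=\Big(\frac{\alpha_n-F(F^{\wedge}(\alpha_n)-)}{\Delta F(F^{\wedge}(\alpha_n))}\Big)_{n\in M}.\]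
   Context: A distribution function is a non-decreasing, right-continuous $F:\mathbb{R}\to[0,1]$ with $\lim_{x\to-\infty}F(x)=0$, $\lim_{x\to\infty}F(x)=1$. Write $F(x-)=\lim_{z\uparrow x}F(z)$, $\Delta F(x)=F(x)-F(x-)$, and $F^{-}:\mathbb{R}\to[0,1]$, $x\mapsto F(x-)$. $J_F=\{x\in\mathbb{R}:\Delta F(x)>0\}$ is the (at most countable) set of jumps of $F$. For $\lambda\in[0,1]$, $F_\lambda(x)=F(x-)+\lambda\Delta F(x)$, and the Rüschendorf transform is $R_F:\mathbb{R}\times[0,1]\to\mathbb{R}$, $R_F(x,\lambda)=F_\lambda(x)$. For $\alpha\in(0,1)$, $F^{\wedge}(\alpha)=\inf\{x\in\mathbb{R}:F(x)\ge\alpha\}$. *)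

theory Defs
  imports Complex_Main "HOL-Library.FuncSet" "HOL-Library.Disjoint_Sets"
begin

definition is_distribution_function :: "(real \<Rightarrow> real) \<Rightarrow> bool" where
  "is_distribution_function F \<longleftrightarrow>
     (\<forall>x. 0 \<le> F x \<and> F x \<le> 1) \<and> mono F \<and>
     (\<forall>x. (F \<longlongrightarrow> F x) (at_right x)) \<and>
     (F \<longlongrightarrow> 0) at_bot \<and> (F \<longlongrightarrow> 1) at_top"

definition left_lim :: "(real \<Rightarrow> real) \<Rightarrow> real \<Rightarrow> real" where
  "left_lim F x = Lim (at_left x) F"

definition jump :: "(real \<Rightarrow> real) \<Rightarrow> real \<Rightarrow> real" where
  "jump F x = F x - left_lim F x"

definition jumps :: "(real \<Rightarrow> real) \<Rightarrow> real set" where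
  "jumps F = {x. jump F x > 0}"

definition F_lam :: "(real \<Rightarrow> real) \<Rightarrow> real \<Rightarrow> real \<Rightarrow> real" where
  "F_lam F lam x = left_lim F x + lam * jump F x"

definition ruesch :: "(real \<Rightarrow> real) \<Rightarrow> real \<times> real \<Rightarrow> real" where
  "ruesch F p = F_lam F (snd p) (fst p)"

definition gen_inv :: "(real \<Rightarrow> real) \<Rightarrow> real \<Rightarrow> real" where
  "gen_inv F \<alpha> = Inf {x. F x \<ge> \<alpha>}"

end

theory Submission
  imports Defs "HOL-Analysis.Analysis"
begin

text \<open>If \<open>F(x-) < \<alpha> < F(x)\<close>, then \<open>F y \<le> F(x-) < \<alpha>\<close> for \<open>y < x\<close> while \<open>\<alpha> < F x\<close>, so
  \<open>F\<^sup>\<and>(\<alpha>) = x\<close>; hence distinct jump intervals are disjoint, and by monotonicity they avoid the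
  ranges of \<open>F\<close> and \<open>F\<^sup>-\<close>. On the jump at \<open>x\<close>, \<open>\<lambda> \<mapsto> F\<^sub>\<lambda>(x)\<close> is an affine bijection from
  \<open>(0,1)\<close> with inverse \<open>\<alpha> \<mapsto> (\<alpha> - F(x-)) / \<Delta>F(x)\<close>, and \<open>x\<close> can be recovered from \<open>\<alpha>\<close> as
  \<open>F\<^sup>\<and>(\<alpha>)\<close>, which gives all the descriptions of the union and the bijection coordinatewise.
  Conversely \<open>F(F\<^sup>\<and>(\<alpha>)-) \<le> \<alpha> \<le> F(F\<^sup>\<and>(\<alpha>))\<close> for every \<open>\<alpha> \<in> (0,1)\<close>, so an \<open>\<alpha>\<close> hitting
  neither range lies strictly inside the jump at \<open>F\<^sup>\<and>(\<alpha>)\<close>.\<close>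

lemma bij_betw_restrict_PiE:
  assumes f: "\<And>n a. n \<in> M \<Longrightarrow> a \<in> A n \<Longrightarrow> f n a \<in> B n \<and> g n (f n a) = a"
    and g: "\<And>n b. n \<in> M \<Longrightarrow> b \<in> B n \<Longrightarrow> g n b \<in> A n \<and> f n (g n b) = b"
  shows "bij_betw (\<lambda>a. restrict (\<lambda>n. f n (a n)) M) (PiE M A) (PiE M B)"
    and "\<And>b. b \<in> PiE M B \<Longrightarrow>
           inv_into (PiE M A) (\<lambda>a. restrict (\<lambda>n. f n (a n)) M) b = restrict (\<lambda>n. g n (b n)) M"
proof -
  let ?\<Phi> = "\<lambda>a. restrict (\<lambda>n. f n (a n)) M" and ?\<Psi> = "\<lambda>b. restrict (\<lambda>n. g n (b n)) M"
  have \<Phi>: "?\<Phi> a \<in> PiE M B" and \<Psi>\<Phi>: "?\<Psi> (?\<Phi> a) = a" if "a \<in> PiE M A" for a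
    using that f by (auto simp: PiE_iff extensional_def fun_eq_iff)
  have \<Psi>: "?\<Psi> b \<in> PiE M A" and \<Phi>\<Psi>: "?\<Phi> (?\<Psi> b) = b" if "b \<in> PiE M B" for b
    using that g by (auto simp: PiE_iff extensional_def fun_eq_iff)
  show bij: "bij_betw ?\<Phi> (PiE M A) (PiE M B)"
    by (rule bij_betwI[where g = ?\<Psi>]) (use \<Phi> \<Psi> \<Psi>\<Phi> \<Phi>\<Psi> in auto)
  show "inv_into (PiE M A) ?\<Phi> b = ?\<Psi> b" if "b \<in> PiE M B" for b
    by (rule inv_into_f_eq[OF bij_betw_imp_inj_on[OF bij]]) (use that \<Psi> \<Phi>\<Psi> in auto)
qed

context
  fixes F :: "real \<Rightarrow> real"
  assumes dF: "is_distribution_function F"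
begin

private lemma mono_F: "mono F"
  and bounds: "0 \<le> F x" "F x \<le> 1"
  and right_cont: "(F \<longlongrightarrow> F x) (at_right x)"
  and lim_at_bot: "(F \<longlongrightarrow> 0) at_bot"
  and lim_at_top: "(F \<longlongrightarrow> 1) at_top"
  using dF by (auto simp: is_distribution_function_def)

lemma left_lim_eq_Sup: "left_lim F x = Sup (F ` {..<x})"
proof -
  have "(F \<longlongrightarrow> Sup (F ` ({..<x} \<inter> UNIV))) (at x within ({..<x} \<inter> UNIV))"
    by (rule Lim_left_bound[where K = 1]) (auto intro: monoD[OF mono_F] bounds)
  then have "(F \<longlongrightarrow> Sup (F ` {..<x})) (at_left x)"
    by simp
  then show ?thesis
    unfolding left_lim_def by (intro tendsto_Lim) auto
qed

lemma le_left_lim: "y < x \<Longrightarrow> F y \<le> left_lim F x"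
  unfolding left_lim_eq_Sup by (intro cSup_upper) (auto intro!: bdd_aboveI[where M = 1] bounds)

lemma left_lim_le: "(\<And>y. y < x \<Longrightarrow> F y \<le> c) \<Longrightarrow> left_lim F x \<le> c"
  unfolding left_lim_eq_Sup by (intro cSup_least) auto

lemma left_lim_le_self: "left_lim F x \<le> F x"
  by (intro left_lim_le monoD[OF mono_F]) simp

lemma left_lim_nonneg: "0 \<le> left_lim F x"
  using bounds(1)[of "x - 1"] le_left_lim[of "x - 1" x] by simp

lemma mono_left_lim: "x \<le> y \<Longrightarrow> left_lim F x \<le> left_lim F y"
  using left_lim_le_self[of x] le_left_lim[of x y] by (cases "x = y") auto

lemma gen_inv_eqI:
  assumes "\<alpha> \<le> F x" and "\<And>y. y < x \<Longrightarrow> F y < \<alpha>"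
  shows "gen_inv F \<alpha> = x"
proof -
  have "{y. \<alpha> \<le> F y} = {x..}"
    using assms monoD[OF mono_F, of x] by (force simp: not_less[symmetric])
  then show ?thesis
    unfolding gen_inv_def by simp
qed

lemma
  assumes "0 < \<alpha>" "\<alpha> < 1"
  shows le_F_gen_inv: "\<alpha> \<le> F (gen_inv F \<alpha>)"
    and F_less_below_gen_inv: "\<And>y. y < gen_inv F \<alpha> \<Longrightarrow> F y < \<alpha>"
proof -
  define S where "S = {y. \<alpha> \<le> F y}"
  have "eventually (\<lambda>y. \<alpha> < F y) at_top"
    using lim_at_top assms by (intro order_tendstoD) auto
  then obtain y1 where "\<alpha> \<le> F y1"
    by (auto simp: eventually_at_top_linorder intro: less_imp_le)
  then have ne: "S \<noteq> {}"
    by (auto simp: S_def)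
  have "eventually (\<lambda>y. F y < \<alpha>) at_bot"
    using lim_at_bot assms by (intro order_tendstoD) auto
  then obtain y0 where y0: "\<And>y. y \<le> y0 \<Longrightarrow> F y < \<alpha>"
    by (auto simp: eventually_at_bot_linorder)
  have bdd: "bdd_below S"
  proof (rule bdd_belowI)
    show "y0 \<le> s" if "s \<in> S" for s
      using that y0[of s] by (force simp: S_def)
  qed
  show below: "F y < \<alpha>" if "y < gen_inv F \<alpha>" for y
    using that cInf_lower[OF _ bdd, of y] by (force simp: S_def gen_inv_def)
  have "eventually (\<lambda>y. \<alpha> \<le> F y) (at_right (Inf S))"
    using eventually_at_right_less[of "Inf S"]
  proof eventually_elim
    case (elim y)
    then obtain s where "s \<in> S" "s < y"
      using cInf_lessD[OF ne] by blast
    then show ?case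
      using monoD[OF mono_F, of s y] by (simp add: S_def)
  qed
  then have "\<alpha> \<le> F (Inf S)"
    by (rule tendsto_lowerbound[OF right_cont]) simp
  then show "\<alpha> \<le> F (gen_inv F \<alpha>)"
    by (simp add: S_def gen_inv_def)
qed

lemma left_lim_gen_inv_le: "0 < \<alpha> \<Longrightarrow> \<alpha> < 1 \<Longrightarrow> left_lim F (gen_inv F \<alpha>) \<le> \<alpha>"
  using F_less_below_gen_inv by (intro left_lim_le) (auto intro: less_imp_le)

lemma jump_interval_imp_gen_inv:
  assumes "left_lim F x < \<alpha>" "\<alpha> < F x"
  shows "0 < \<alpha>" "\<alpha> < 1" "gen_inv F \<alpha> = x"
  using assms left_lim_nonneg[of x] bounds(2)[of x]
  by (auto intro!: gen_inv_eqI dest: le_left_lim[of _ x])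

lemma jump_interval_subset_gen_inv_vimage:
  "{left_lim F x <..< F x} \<subseteq> {\<alpha> \<in> {0<..<1}. x = gen_inv F \<alpha>}"
  using jump_interval_imp_gen_inv by fastforce

lemma gen_inv_vimage_subset_closed_jump_interval:
  "{\<alpha> \<in> {0<..<1}. x = gen_inv F \<alpha>} \<subseteq> {left_lim F x .. F x}"
  using left_lim_gen_inv_le le_F_gen_inv by auto

lemma jump_intervals_disjoint:
  "x1 \<noteq> x2 \<Longrightarrow> {left_lim F x1 <..< F x1} \<inter> {left_lim F x2 <..< F x2} = {}"
  using jump_interval_imp_gen_inv(3)[of x1] jump_interval_imp_gen_inv(3)[of x2]
  by (metis disjoint_iff greaterThanLessThan_iff)

lemma disjoint_family_on_jump_intervals:
  "disjoint_family_on (\<lambda>x. {left_lim F x <..< F x}) J"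
  unfolding disjoint_family_on_def using jump_intervals_disjoint by blast

lemma jump_interval_notin_ranges:
  assumes "left_lim F x < \<alpha>" "\<alpha> < F x"
  shows "\<alpha> \<notin> range F \<union> range (left_lim F)"
proof -
  have "F y \<noteq> \<alpha>" for y
    using assms le_left_lim[of y x] monoD[OF mono_F, of x y] by (cases "y < x") auto
  moreover have "left_lim F y \<noteq> \<alpha>" for y
    using assms mono_left_lim[of y x] le_left_lim[of x y] by (cases "y \<le> x") auto
  ultimately show ?thesis
    by auto
qed

lemma in_jump_interval_if_notin_ranges:
  assumes "0 < \<alpha>" "\<alpha> < 1" "\<alpha> \<notin> range F \<union> range (left_lim F)"
  shows "left_lim F (gen_inv F \<alpha>) < \<alpha>" "\<alpha> < F (gen_inv F \<alpha>)"
  using assms left_lim_gen_inv_le le_F_gen_inv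
  by (metis UnCI order_le_less rangeI)+

end

lemma F_lam_in_jump_interval:
  assumes "0 < jump F x" "0 < lam" "lam < 1"
  shows "F_lam F lam x \<in> {left_lim F x <..< F x}"
proof -
  have "0 < lam * jump F x" "lam * jump F x < jump F x"
    using assms by simp_all
  then show ?thesis
    by (simp add: F_lam_def jump_def)
qed

lemma F_lam_coordinate:
  "0 < jump F x \<Longrightarrow> (F_lam F lam x - left_lim F x) / jump F x = lam"
  by (simp add: F_lam_def)

lemma F_lam_coordinate_in_unit_interval:
  "\<alpha> \<in> {left_lim F x <..< F x} \<Longrightarrow> (\<alpha> - left_lim F x) / jump F x \<in> {0<..<1}"
  by (simp add: jump_def field_simps)

lemma eq_F_lam_coordinate:
  "0 < jump F x \<Longrightarrow> \<alpha> = F_lam F ((\<alpha> - left_lim F x) / jump F x) x"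
  by (simp add: F_lam_def)

lemma ruesch_image_eq:
  "ruesch F ` (J \<times> {0<..<1}) = {F_lam F lam x | lam x. 0 < lam \<and> lam < 1 \<and> x \<in> J}"
  by (force simp: ruesch_def)

context
  fixes F :: "real \<Rightarrow> real"
  assumes dF: "is_distribution_function F"
begin

lemma Union_jump_intervals_eq_F_lam_image:
  "(\<Union>x\<in>jumps F. {left_lim F x <..< F x})
     = {F_lam F lam x | lam x. 0 < lam \<and> lam < 1 \<and> x \<in> jumps F}"
proof safe
  fix \<alpha> x assume "x \<in> jumps F" "\<alpha> \<in> {left_lim F x <..< F x}"
  then show "\<exists>lam y. \<alpha> = F_lam F lam y \<and> 0 < lam \<and> lam < 1 \<and> y \<in> jumps F"
    using F_lam_coordinate_in_unit_interval eq_F_lam_coordinate by (fastforce simp: jumps_def)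
qed (use F_lam_in_jump_interval in \<open>auto simp: jumps_def\<close>)

lemma Union_jump_intervals_eq_gen_inv_jump_set:
  "(\<Union>x\<in>jumps F. {left_lim F x <..< F x})
     = {\<alpha> \<in> {0<..<1}. jump F (gen_inv F \<alpha>) > 0 \<and>
          (\<exists>lam. 0 < lam \<and> lam < 1 \<and> \<alpha> = F_lam F lam (gen_inv F \<alpha>))}"
proof safe
  fix \<alpha> x assume "x \<in> jumps F" and \<alpha>: "\<alpha> \<in> {left_lim F x <..< F x}"
  then have x: "gen_inv F \<alpha> = x" "0 < jump F x"
    using jump_interval_imp_gen_inv[OF dF] by (auto simp: jumps_def)
  show "\<alpha> \<in> {0<..<1}"
    using jump_interval_imp_gen_inv[OF dF] \<alpha> by auto
  show "0 < jump F (gen_inv F \<alpha>)"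
    using x by simp
  show "\<exists>lam. 0 < lam \<and> lam < 1 \<and> \<alpha> = F_lam F lam (gen_inv F \<alpha>)"
    using F_lam_coordinate_in_unit_interval[OF \<alpha>] eq_F_lam_coordinate[OF x(2)] x by auto
next
  fix \<alpha> lam :: real
  assume "0 < jump F (gen_inv F \<alpha>)" "0 < lam" "lam < 1" "\<alpha> = F_lam F lam (gen_inv F \<alpha>)"
  then show "\<alpha> \<in> (\<Union>x\<in>jumps F. {left_lim F x <..< F x})"
    using F_lam_in_jump_interval[of F "gen_inv F \<alpha>" lam] by (auto simp: jumps_def)
qed

lemma Union_jump_intervals_eq_complement_ranges:
  "(\<Union>x\<in>jumps F. {left_lim F x <..< F x}) = {0<..<1} - (range F \<union> range (left_lim F))"
proof
  show "(\<Union>x\<in>jumps F. {left_lim F x <..< F x}) \<subseteq> {0<..<1} - (range F \<union> range (left_lim F))"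
    using jump_interval_imp_gen_inv(1,2)[OF dF] jump_interval_notin_ranges[OF dF] by fastforce
  show "{0<..<1} - (range F \<union> range (left_lim F)) \<subseteq> (\<Union>x\<in>jumps F. {left_lim F x <..< F x})"
  proof
    fix \<alpha> :: real assume "\<alpha> \<in> {0<..<1} - (range F \<union> range (left_lim F))"
    then show "\<alpha> \<in> (\<Union>x\<in>jumps F. {left_lim F x <..< F x})"
      using in_jump_interval_if_notin_ranges[OF dF, of \<alpha>]
      by (intro UN_I[of "gen_inv F \<alpha>"]) (auto simp: jumps_def jump_def)
  qed
qed

lemma F_lam_PiE_bij:
  assumes "xs ` M \<subseteq> jumps F"
  defines "\<Phi> \<equiv> \<lambda>lam. restrict (\<lambda>n. F_lam F (lam n) (xs n)) M"
  shows "bij_betw \<Phi> (PiE M (\<lambda>_. {0<..<1})) (PiE M (\<lambda>n. {left_lim F (xs n) <..< F (xs n)}))"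
    and "\<And>\<alpha>. \<alpha> \<in> PiE M (\<lambda>n. {left_lim F (xs n) <..< F (xs n)}) \<Longrightarrow>
           inv_into (PiE M (\<lambda>_. {0<..<1})) \<Phi> \<alpha> =
             restrict (\<lambda>n. (\<alpha> n - left_lim F (gen_inv F (\<alpha> n))) / jump F (gen_inv F (\<alpha> n))) M"
proof -
  have jump: "0 < jump F (xs n)" if "n \<in> M" for n
    using assms(1) that by (auto simp: jumps_def)
  note gen_inv = jump_interval_imp_gen_inv(3)[OF dF]
  let ?g = "\<lambda>n \<alpha>. (\<alpha> - left_lim F (gen_inv F \<alpha>)) / jump F (gen_inv F \<alpha>)"
  have f: "\<And>n lam. n \<in> M \<Longrightarrow> lam \<in> {0<..<1} \<Longrightarrow>
      F_lam F lam (xs n) \<in> {left_lim F (xs n) <..< F (xs n)} \<and> ?g n (F_lam F lam (xs n)) = lam"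
    using F_lam_in_jump_interval jump gen_inv F_lam_coordinate by fastforce
  have g: "\<And>n \<alpha>. n \<in> M \<Longrightarrow> \<alpha> \<in> {left_lim F (xs n) <..< F (xs n)} \<Longrightarrow>
      ?g n \<alpha> \<in> {0<..<1} \<and> F_lam F (?g n \<alpha>) (xs n) = \<alpha>"
    using F_lam_coordinate_in_unit_interval gen_inv eq_F_lam_coordinate[OF jump]
    by (metis greaterThanLessThan_iff)
  show "bij_betw \<Phi> (PiE M (\<lambda>_. {0<..<1})) (PiE M (\<lambda>n. {left_lim F (xs n) <..< F (xs n)}))"
    unfolding \<Phi>_def by (rule bij_betw_restrict_PiE(1)[OF f g])
  show "inv_into (PiE M (\<lambda>_. {0<..<1})) \<Phi> \<alpha> = restrict (\<lambda>n. ?g n (\<alpha> n)) M"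
    if "\<alpha> \<in> PiE M (\<lambda>n. {left_lim F (xs n) <..< F (xs n)})" for \<alpha>
    unfolding \<Phi>_def by (rule bij_betw_restrict_PiE(2)[OF f g that])
qed

end

theorem mainTheorem2:
  fixes F :: "real \<Rightarrow> real"
  assumes dF: "is_distribution_function F"
  shows
    "(\<forall>x. {left_lim F x <..< F x} \<subseteq> {\<alpha> \<in> {0<..<1}. x = gen_inv F \<alpha>}
          \<and> {\<alpha> \<in> {0<..<1}. x = gen_inv F \<alpha>} \<subseteq> {left_lim F x .. F x})
     \<and> (\<forall>x1 x2. x1 \<noteq> x2 \<longrightarrow> {left_lim F x1 <..< F x1} \<inter> {left_lim F x2 <..< F x2} = {})
     \<and> (\<Union>x\<in>jumps F. {left_lim F x <..< F x})
         = {\<alpha> \<in> {0<..<1}. jump F (gen_inv F \<alpha>) > 0 \<and>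
              (\<exists>lam. 0 < lam \<and> lam < 1 \<and> \<alpha> = F_lam F lam (gen_inv F \<alpha>))}
     \<and> {\<alpha> \<in> {0<..<1}. jump F (gen_inv F \<alpha>) > 0 \<and>
              (\<exists>lam. 0 < lam \<and> lam < 1 \<and> \<alpha> = F_lam F lam (gen_inv F \<alpha>))}
         = {F_lam F lam x | lam x. 0 < lam \<and> lam < 1 \<and> x \<in> jumps F}
     \<and> {F_lam F lam x | lam x. 0 < lam \<and> lam < 1 \<and> x \<in> jumps F}
         = ruesch F ` (jumps F \<times> {0<..<1})
     \<and> ruesch F ` (jumps F \<times> {0<..<1})
         = {0<..<1} - (range F \<union> range (left_lim F))
     \<and> disjoint_family_on (\<lambda>x. {left_lim F x <..< F x}) (jumps F)
     \<and> (\<forall>(M :: nat set) (xs :: nat \<Rightarrow> real).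
          ((\<exists>m. M = {1..m}) \<or> M = UNIV) \<and> inj_on xs M \<and> xs ` M = jumps F \<longrightarrow>
          (let \<Phi> = (\<lambda>lam. restrict (\<lambda>n. F_lam F (lam n) (xs n)) M);
               Dom = PiE M (\<lambda>_. {0<..<1::real});
               Cod = PiE M (\<lambda>n. {left_lim F (xs n) <..< F (xs n)})
           in bij_betw \<Phi> Dom Cod \<and>
              (\<forall>\<alpha>\<in>Cod. inv_into Dom \<Phi> \<alpha> =
                 restrict (\<lambda>n. (\<alpha> n - left_lim F (gen_inv F (\<alpha> n))) / jump F (gen_inv F (\<alpha> n))) M)))"
proof -
  have bij: "bij_betw \<Phi> Dom Cod \<and> (\<forall>\<alpha>\<in>Cod. inv_into Dom \<Phi> \<alpha> =
      restrict (\<lambda>n. (\<alpha> n - left_lim F (gen_inv F (\<alpha> n))) / jump F (gen_inv F (\<alpha> n))) M)"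
    if "xs ` M = jumps F"
      and "\<Phi> = (\<lambda>lam. restrict (\<lambda>n. F_lam F (lam n) (xs n)) M)"
      and "Dom = PiE M (\<lambda>_. {0<..<1})" and "Cod = PiE M (\<lambda>n. {left_lim F (xs n) <..< F (xs n)})"
    for M xs \<Phi> Dom Cod
    using F_lam_PiE_bij[OF dF, of xs M] that by simp
  show ?thesis
    unfolding Let_def
    using jump_interval_subset_gen_inv_vimage[OF dF] gen_inv_vimage_subset_closed_jump_interval[OF dF]
      jump_intervals_disjoint[OF dF] ruesch_image_eq[of F "jumps F"]
      Union_jump_intervals_eq_F_lam_image[OF dF] Union_jump_intervals_eq_gen_inv_jump_set[OF dF]
      Union_jump_intervals_eq_complement_ranges[OF dF]
    by (intro conjI allI impI disjoint_family_on_jump_intervals[OF dF] bij refl) (simp_all only:)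
qed

end
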